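(* Let $C$ be a set of colours and $W_2=\{w_0w_1w_2\cdots\in C^\omega:\ w_i\neq w_{i+1}\text{ for all } i\}$. Then $W_2$ does not have ($\varepsilon$-free) chromatic memory $<|C|$; consequently $W_2$ does not have $\varepsilon$-chromatic memory $<|C|$ either.
   Context: A $C$-game is $(G,V_{\mathrm{Eve}},v_0,W)$ with $G$ a $C$-graph (vertices with coloured directed edges $v\xrightarrow{c}v'$, every vertex having an outgoing edge). A strategy is $(S,\pi,s_0)$ with $S$ a $C$-graph, $\pi:S\to G$ an edge- and colour-preserving map, $\pi(s_0)=v_0$, such that for all $v\notin V_{\mathrm{Eve}}$, $v\xrightarrow{c}v'\in E(G)$, $s\in\pi^{-1}(v)$ there is $s'\in\pi^{-1}(v')$ with $s\xrightarrow{c}s'$; it is winning if all infinite paths from $s_0$ have colour sequence in $W$. A product strategy over $M$ has $V(S)\subseteq V(G)\times M$ and $\pi(v,m)=v$; it is chromatic if there is $\delta:M\times C\to M$ with $m'=\delta(m,c)$ for each edge $(v,m)\xrightarrow{c}(v',m')$ of $S$. $W$ has chromatic memory $<\nu$ if every game with objective $W$ having a winning strategy has a winning chromatic product strategy with $|\pi^{-1}(v)|<\nu$ for all $v$. With a fresh colour $\varepsilon$ and $C^\varepsilon=C\sqcup\{\varepsilon\}$, $W^\varepsilon$ is the set of $w\in(C^\varepsilon)^\omega$ whose $\varepsilon$-free projection is infinite and in $W$ or finite with a continuation in $W$; $W$ has $\varepsilon$-chromatic memory $<\nu$ if every $C^\varepsilon$-game with objective $W^\varepsilon$ having a winning strategy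 has a winning chromatic product strategy over some $M$ with $|M|<\nu$ whose update function satisfies $\delta(m,\varepsilon)=m$. *)

theory Defs
  imports Main "HOL-Library.Infinite_Set"
begin

definition cgraph :: "'v set \<Rightarrow> ('v \<times> 'col \<times> 'v) set \<Rightarrow> bool" where
  "cgraph V E \<longleftrightarrow> E \<subseteq> V \<times> UNIV \<times> V \<and> (\<forall>v\<in>V. \<exists>c v'. (v, c, v') \<in> E)"

text \<open>A game (G, V_Eve, v0, W): G = (V,E) a C-graph, VE the vertices of Eve, v0 initial.\<close>

definition is_game :: "'v set \<Rightarrow> ('v \<times> 'col \<times> 'v) set \<Rightarrow> 'v set \<Rightarrow> 'v \<Rightarrow> bool" where
  "is_game V E VE v0 \<longleftrightarrow> cgraph V E \<and> VE \<subseteq> V \<and> v0 \<in> V"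

definition is_strategy ::
  "'v set \<Rightarrow> ('v \<times> 'col \<times> 'v) set \<Rightarrow> 'v set \<Rightarrow> 'v \<Rightarrow>
   's set \<Rightarrow> ('s \<times> 'col \<times> 's) set \<Rightarrow> ('s \<Rightarrow> 'v) \<Rightarrow> 's \<Rightarrow> bool" where
  "is_strategy V E VE v0 S ES \<pi> s0 \<longleftrightarrow>
     cgraph S ES \<and> s0 \<in> S \<and> \<pi> ` S \<subseteq> V \<and>
     (\<forall>s c s'. (s, c, s') \<in> ES \<longrightarrow> (\<pi> s, c, \<pi> s') \<in> E) \<and>
     \<pi> s0 = v0 \<and>
     (\<forall>v c v' s. v \<in> V - VE \<longrightarrow> (v, c, v') \<in> E \<longrightarrow> s \<in> S \<longrightarrow> \<pi> s = v \<longrightarrow>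
        (\<exists>s'. s' \<in> S \<and> \<pi> s' = v' \<and> (s, c, s') \<in> ES))"

definition winning_from :: "('s \<times> 'col \<times> 's) set \<Rightarrow> 's \<Rightarrow> (nat \<Rightarrow> 'col) set \<Rightarrow> bool" where
  "winning_from ES s0 W \<longleftrightarrow>
     (\<forall>\<rho> \<kappa>. \<rho> 0 = s0 \<and> (\<forall>i. (\<rho> i, \<kappa> i, \<rho> (Suc i)) \<in> ES) \<longrightarrow> \<kappa> \<in> W)"

text \<open>Strategy vertices are taken from the type of
  finite plays ('col \<times> 'v) list, which is general enough (every strategy can be unfolded
  into one over finite plays).\<close>

definition has_winning_strategy ::
  "'v set \<Rightarrow> ('v \<times> 'col \<times> 'v) set \<Rightarrow> 'v set \<Rightarrow> 'v \<Rightarrow> (nat \<Rightarrow> 'col) set \<Rightarrow> bool" where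
  "has_winning_strategy V E VE v0 W \<longleftrightarrow>
     (\<exists>(S :: ('col \<times> 'v) list set) ES \<pi> s0.
        is_strategy V E VE v0 S ES \<pi> s0 \<and> winning_from ES s0 W)"

definition chromatic ::
  "(('v \<times> 'm) \<times> 'col \<times> ('v \<times> 'm)) set \<Rightarrow> ('m \<Rightarrow> 'col \<Rightarrow> 'm) \<Rightarrow> bool" where
  "chromatic ES \<delta> \<longleftrightarrow> (\<forall>v m c v' m'. ((v, m), c, (v', m')) \<in> ES \<longrightarrow> m' = \<delta> m c)"

text \<open>W has chromatic memory < nu (nu a cardinal, given as a cardinal order),
  relative to games whose vertices live in type 'v and memories in type 'm.
  The fibre pi^{-1}(v) of a product strategy S is {m. (v,m) \<in> S}.\<close>

definition chrom_mem_lt ::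
  "'v itself \<Rightarrow> 'm itself \<Rightarrow> (nat \<Rightarrow> 'col) set \<Rightarrow> 'x rel \<Rightarrow> bool" where
  "chrom_mem_lt _ _ W \<nu> \<longleftrightarrow>
     (\<forall>(V :: 'v set) E VE v0.
        is_game V E VE v0 \<and> has_winning_strategy V E VE v0 W \<longrightarrow>
        (\<exists>(S :: ('v \<times> 'm) set) ES s0 \<delta>.
           is_strategy V E VE v0 S ES fst s0 \<and> winning_from ES s0 W \<and>
           chromatic ES \<delta> \<and>
           (\<forall>v. ordLess2 (card_of {m. (v, m) \<in> S}) \<nu>)))"

definition W2 :: "(nat \<Rightarrow> 'c) set" where
  "W2 = {w. \<forall>i. w i \<noteq> w (Suc i)}"

text \<open>W^epsilon over C \<union> {epsilon}, with epsilon represented by None.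
  The epsilon-free projection of w is infinite iff infinitely many letters are not None;
  in that case it is the sequence of the non-None letters in order.  Otherwise it is the
  finite word of the non-None letters, which must have a continuation in W.\<close>

definition eps_ext :: "(nat \<Rightarrow> 'c) set \<Rightarrow> (nat \<Rightarrow> 'c option) set" where
  "eps_ext W = {w.
     (infinite {i. w i \<noteq> None} \<and>
        (\<lambda>n. the (w (enumerate {i. w i \<noteq> None} n))) \<in> W) \<or>
     (\<exists>N u. (\<forall>i\<ge>N. w i = None) \<and> u \<in> W \<and>
        (let xs = map the (filter (\<lambda>x. x \<noteq> None) (map w [0..<N]))
         in \<forall>k < length xs. u k = xs ! k))}"

definition eps_chrom_mem_lt ::
  "'v itself \<Rightarrow> 'm itself \<Rightarrow> (nat \<Rightarrow> 'c) set \<Rightarrow> 'x rel \<Rightarrow> bool" where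
  "eps_chrom_mem_lt _ _ W \<nu> \<longleftrightarrow>
     (\<forall>(V :: 'v set) (E :: ('v \<times> 'c option \<times> 'v) set) VE v0.
        is_game V E VE v0 \<and> has_winning_strategy V E VE v0 (eps_ext W) \<longrightarrow>
        (\<exists>(M :: 'm set) (S :: ('v \<times> 'm) set) ES s0 \<delta>.
           ordLess2 (card_of M) \<nu> \<and>
           S \<subseteq> V \<times> M \<and> (\<forall>m\<in>M. \<forall>c. \<delta> m c \<in> M) \<and> (\<forall>m. \<delta> m None = m) \<and>
           is_strategy V E VE v0 S ES fst s0 \<and> winning_from ES s0 (eps_ext W) \<and>
           chromatic ES \<delta>))"

end

theory Submission
  imports Defs
begin

text \<open>
  Consider the game where Adam moves first: he plays an arbitrary colour c and picks a vertex
  naming two distinct colours x, y, where Eve then stays forever, each turn playing x or y.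
  Remembering the last colour, she wins W2 by alternating. A chromatic strategy, however, is in
  memory state \<delta>(m0, c) after Adam's opening c. If \<delta>(m0, c) = \<delta>(m0, c') for c \<noteq> c', then at
  the vertex naming c and c' Eve's reply d is the same after both openings, and Adam could have
  opened with d, producing the repetition d d. So c \<mapsto> \<delta>(m0, c) is injective and a single
  vertex carries at least |C| memory states. Over C plus \<epsilon> the same game, in which \<epsilon> never
  occurs, gives the second statement.
\<close>

lemma is_strategyD:
  assumes "is_strategy V E VE v0 S ES \<pi> s0"
  shows "cgraph S ES" and "s0 \<in> S" and "\<pi> s0 = v0"
    and "(s, c, s') \<in> ES \<Longrightarrow> (\<pi> s, c, \<pi> s') \<in> E"
    and "v \<in> V - VE \<Longrightarrow> (v, c, v') \<in> E \<Longrightarrow> s \<in> S \<Longrightarrow> \<pi> s = v \<Longrightarrow>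
      \<exists>s'. s' \<in> S \<and> \<pi> s' = v' \<and> (s, c, s') \<in> ES"
  using assms unfolding is_strategy_def by simp_all

lemma cgraph_infinite_path:
  assumes "cgraph S ES" and "s \<in> S"
  obtains \<rho> \<kappa> where "\<rho> 0 = s" and "\<forall>i. (\<rho> i, \<kappa> i, \<rho> (Suc i)) \<in> ES"
proof -
  have "\<forall>v\<in>S. \<exists>p. (v, fst p, snd p) \<in> ES"
    using assms(1) unfolding cgraph_def by auto
  then obtain step where step: "\<forall>v\<in>S. (v, fst (step v), snd (step v)) \<in> ES"
    by metis
  define \<rho> where "\<rho> n = ((snd \<circ> step) ^^ n) s" for n
  have "\<rho> n \<in> S" for n
  proof (induction n)
    case (Suc n)
    then have "(\<rho> n, fst (step (\<rho> n)), snd (step (\<rho> n))) \<in> ES" using step by blast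
    then show ?case using assms(1) unfolding cgraph_def \<rho>_def by auto
  qed (simp add: \<rho>_def assms(2))
  then show thesis
    using that[of \<rho> "\<lambda>i. fst (step (\<rho> i))"] step by (simp add: \<rho>_def)
qed

lemma path_prepend_edge:
  assumes "\<forall>i. (\<rho> i, \<kappa> i, \<rho> (Suc i)) \<in> ES" and "(s, c, \<rho> 0) \<in> ES"
  shows "\<forall>i. (case_nat s \<rho> i, case_nat c \<kappa> i, case_nat s \<rho> (Suc i)) \<in> ES"
  using assms by (auto split: nat.split)

lemma enumerate_UNIV_nat: "enumerate (UNIV :: nat set) n = n"
proof (induction n)
  case 0
  show ?case unfolding enumerate_0 by (rule Least_equality) auto
next
  case (Suc n)
  have "enumerate (UNIV :: nat set) (Suc n) = (LEAST s. enumerate UNIV n < s)"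
    by (simp add: enumerate_Suc'')
  also have "\<dots> = Suc n"
    using Suc by (auto intro: Least_equality)
  finally show ?case .
qed

lemma Some_comp_in_eps_ext_iff: "Some \<circ> w \<in> eps_ext W \<longleftrightarrow> w \<in> W"
proof -
  have "{i. (Some \<circ> w) i \<noteq> None} = UNIV" by simp
  then show ?thesis
    unfolding eps_ext_def by (auto simp: enumerate_UNIV_nat)
qed

lemma W2_no_initial_repetition: "w \<in> W2 \<Longrightarrow> w 0 \<noteq> w (Suc 0)"
  unfolding W2_def by blast

text \<open>Lists that do not name two distinct colours still give Eve the two options a and b.\<close>

fun choices :: "'c \<Rightarrow> 'c \<Rightarrow> 'c list \<Rightarrow> 'c set" where
  "choices a b [x, y] = (if x \<noteq> y then {x, y} else {a, b})"
| "choices a b _ = {a, b}"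

lemma choices_two_distinct: "a \<noteq> b \<Longrightarrow> \<exists>x\<in>choices a b v. \<exists>y\<in>choices a b v. x \<noteq> y"
  by (induction a b v rule: choices.induct) auto

lemma choices_nonempty: "choices a b v \<noteq> {}"
  by (induction a b v rule: choices.induct) auto

definition pair_game :: "('c \<Rightarrow> 'k) \<Rightarrow> 'c \<Rightarrow> 'c \<Rightarrow> ('c list \<times> 'k \<times> 'c list) set" where
  "pair_game f a b =
     {([], f c, v) | c v. v \<noteq> []} \<union> {(v, f d, v) | v d. v \<noteq> [] \<and> d \<in> choices a b v}"

lemma pair_game_colour: "(v, k, v') \<in> pair_game f a b \<Longrightarrow> k \<in> range f"
  unfolding pair_game_def by auto

lemma is_game_pair_game: "is_game UNIV (pair_game f a b) (UNIV - {[]}) []"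
proof -
  have "\<exists>c v'. (v, c, v') \<in> pair_game f a b" for v
  proof (cases "v = []")
    case True
    then have "(v, f a, [a]) \<in> pair_game f a b" unfolding pair_game_def by blast
    then show ?thesis by blast
  next
    case False
    obtain d where "d \<in> choices a b v" using choices_nonempty[of a b v] by auto
    with False have "(v, f d, v) \<in> pair_game f a b" unfolding pair_game_def by blast
    then show ?thesis by blast
  qed
  then show ?thesis unfolding is_game_def cgraph_def by simp
qed

text \<open>Eve's strategy only remembers the last colour: the state [(k, v)] means that the play is
  at v and k was played last. States are lists because has_winning_strategy fixes the
  type of strategy vertices.\<close>

fun state_vertex :: "('k \<times> 'c list) list \<Rightarrow> 'c list" where
  "state_vertex [] = []"
| "state_vertex ((k, v) # _) = v"

definition last_colour_states :: "('k \<times> 'c list) list set" where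
  "last_colour_states = {[]} \<union> {[(k, v)] | k v. v \<noteq> []}"

definition last_colour_edges ::
  "('c \<Rightarrow> 'k) \<Rightarrow> 'c \<Rightarrow> 'c \<Rightarrow> (('k \<times> 'c list) list \<times> 'k \<times> ('k \<times> 'c list) list) set" where
  "last_colour_edges f a b =
     {([], f c, [(f c, v)]) | c v. v \<noteq> []} \<union>
     {([(k, v)], f d, [(f d, v)]) | k v d. v \<noteq> [] \<and> d \<in> choices a b v \<and> f d \<noteq> k}"

lemma last_colour_edges_total:
  assumes "a \<noteq> b" and "inj f" and "s \<in> last_colour_states"
  shows "\<exists>c s'. (s, c, s') \<in> last_colour_edges f a b"
proof (cases "s = []")
  case True
  then have "(s, f a, [(f a, [a])]) \<in> last_colour_edges f a b"
    unfolding last_colour_edges_def by blast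
  then show ?thesis by blast
next
  case False
  then obtain k v where s: "s = [(k, v)]" and "v \<noteq> []"
    using assms(3) unfolding last_colour_states_def by blast
  obtain x y where "x \<in> choices a b v" "y \<in> choices a b v" "x \<noteq> y"
    using choices_two_distinct[OF assms(1)] by blast
  then obtain d where "d \<in> choices a b v" and "f d \<noteq> k"
    using assms(2) by (cases "f x = k") (auto dest: injD)
  with s \<open>v \<noteq> []\<close> have "(s, f d, [(f d, v)]) \<in> last_colour_edges f a b"
    unfolding last_colour_edges_def by blast
  then show ?thesis by blast
qed

lemma cgraph_last_colour:
  assumes "a \<noteq> b" and "inj f"
  shows "cgraph last_colour_states (last_colour_edges f a b)"
proof -
  have "last_colour_edges f a b \<subseteq> last_colour_states \<times> UNIV \<times> last_colour_states"
    unfolding last_colour_edges_def last_colour_states_def by auto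
  then show ?thesis
    unfolding cgraph_def using last_colour_edges_total[OF assms] by blast
qed

lemma is_strategy_last_colour:
  fixes f :: "'c \<Rightarrow> 'k"
  assumes "a \<noteq> b" and "inj f"
  shows "is_strategy UNIV (pair_game f a b) (UNIV - {[]}) []
           last_colour_states (last_colour_edges f a b) state_vertex []"
  unfolding is_strategy_def
proof (intro conjI allI impI)
  show "cgraph last_colour_states (last_colour_edges f a b)"
    using cgraph_last_colour[OF assms] .
  show "[] \<in> last_colour_states"
    unfolding last_colour_states_def by blast
  fix s c s'
  assume "(s, c, s') \<in> last_colour_edges f a b"
  then show "(state_vertex s, c, state_vertex s') \<in> pair_game f a b"
    unfolding last_colour_edges_def pair_game_def by auto
next
  fix v c v' and s :: "('k \<times> 'c list) list"
  assume "v \<in> UNIV - (UNIV - {[]})" and move: "(v, c, v') \<in> pair_game f a b"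
    and "s \<in> last_colour_states" and "state_vertex s = v"
  then have "s = []" and "v = []"
    unfolding last_colour_states_def by auto
  moreover from move \<open>v = []\<close> have "v' \<noteq> []" and "c \<in> range f"
    unfolding pair_game_def by auto
  ultimately have "(s, c, [(c, v')]) \<in> last_colour_edges f a b"
    unfolding last_colour_edges_def by blast
  moreover have "[(c, v')] \<in> last_colour_states"
    using \<open>v' \<noteq> []\<close> unfolding last_colour_states_def by blast
  ultimately show "\<exists>s'. s' \<in> last_colour_states \<and> state_vertex s' = v' \<and>
      (s, c, s') \<in> last_colour_edges f a b" by auto
qed simp_all

lemma winning_last_colour:
  assumes "\<And>w. w \<in> W2 \<Longrightarrow> f \<circ> w \<in> W"
  shows "winning_from (last_colour_edges f a b) [] W"
  unfolding winning_from_def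
proof (intro allI impI, elim conjE)
  fix \<rho> \<kappa> assume path: "\<forall>i. (\<rho> i, \<kappa> i, \<rho> (Suc i)) \<in> last_colour_edges f a b"
  have colour: "\<kappa> i \<in> range f" and next_state: "\<exists>v. \<rho> (Suc i) = [(\<kappa> i, v)]" for i
    using path[rule_format, of i] unfolding last_colour_edges_def by auto
  have alternating: "\<kappa> i \<noteq> \<kappa> (Suc i)" for i
    using next_state[of i] path[rule_format, of "Suc i"] unfolding last_colour_edges_def by auto
  define w where "w = inv f \<circ> \<kappa>"
  have \<kappa>_eq: "f (w i) = \<kappa> i" for i
    using colour by (simp add: w_def f_inv_into_f)
  have "w i \<noteq> w (Suc i)" for i
    using alternating[of i] \<kappa>_eq[of i] \<kappa>_eq[of "Suc i"] by auto
  then have "w \<in> W2"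
    unfolding W2_def by blast
  then show "\<kappa> \<in> W"
    using assms[of w] \<kappa>_eq by (simp add: comp_def)
qed

lemma has_winning_strategy_pair_game:
  assumes "a \<noteq> b" and "inj f" and "\<And>w. w \<in> W2 \<Longrightarrow> f \<circ> w \<in> W"
  shows "has_winning_strategy UNIV (pair_game f a b) (UNIV - {[]}) [] W"
  unfolding has_winning_strategy_def
  using is_strategy_last_colour[OF assms(1,2)] winning_last_colour[OF assms(3)] by blast

context
  includes cardinal_syntax
  fixes f :: "'c \<Rightarrow> 'k" and a b :: 'c and S :: "('c list \<times> 'm) set" and ES s0 \<delta>
  assumes strategy: "is_strategy UNIV (pair_game f a b) (UNIV - {[]}) [] S ES fst s0"
    and chromatic: "chromatic ES \<delta>"
begin

lemma pair_game_chromatic_first_move: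
  assumes "v \<noteq> []"
  shows "(s0, f c, (v, \<delta> (snd s0) (f c))) \<in> ES"
proof -
  have "([], f c, v) \<in> pair_game f a b"
    using assms unfolding pair_game_def by blast
  then obtain s' where "fst s' = v" and move: "(s0, f c, s') \<in> ES"
    using is_strategyD(2,3,5)[OF strategy] by blast
  moreover have "snd s' = \<delta> (snd s0) (f c)"
    using chromatic move is_strategyD(3)[OF strategy] unfolding chromatic_def
    by (metis prod.collapse)
  ultimately show ?thesis
    by (metis prod.collapse)
qed

lemma pair_game_strategy_colour: "(s, k, s') \<in> ES \<Longrightarrow> k \<in> range f"
  by (rule pair_game_colour[OF is_strategyD(4)[OF strategy]])

context
  fixes W :: "(nat \<Rightarrow> 'k) set"
  assumes winning: "winning_from ES s0 W"
    and no_initial_repetition: "\<And>w. f \<circ> w \<in> W \<Longrightarrow> w 0 \<noteq> w (Suc 0)"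
begin

lemma pair_game_first_memory_inj: "inj (\<lambda>c. \<delta> (snd s0) (f c))"
proof (rule injI, rule ccontr)
  fix c c' assume same: "\<delta> (snd s0) (f c) = \<delta> (snd s0) (f c')" and "c \<noteq> c'"
  define s1 where "s1 = ([c, c'], \<delta> (snd s0) (f c))"
  have to_s1: "(s0, f d, s1) \<in> ES" if "d \<in> {c, c'}" for d
    using pair_game_chromatic_first_move[of "[c, c']" d] same that unfolding s1_def by auto
  note graph = is_strategyD(1)[OF strategy]
  then have "s1 \<in> S"
    using to_s1[of c] unfolding cgraph_def by blast
  then obtain e s2 where e: "(s1, e, s2) \<in> ES" and "s2 \<in> S"
    using graph unfolding cgraph_def by blast
  then have "([c, c'], e, fst s2) \<in> pair_game f a b"
    using is_strategyD(4)[OF strategy] unfolding s1_def by fastforce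
  then obtain d where "d \<in> {c, c'}" and "e = f d"
    using \<open>c \<noteq> c'\<close> unfolding pair_game_def by auto
  \<comment> \<open>Adam could have opened with Eve's reply e itself, so e can be played twice in a row.\<close>
  with to_s1 have "(s0, e, s1) \<in> ES" by blast
  obtain \<rho> \<kappa> where "\<rho> 0 = s2" and tail: "\<forall>i. (\<rho> i, \<kappa> i, \<rho> (Suc i)) \<in> ES"
    using cgraph_infinite_path[OF graph \<open>s2 \<in> S\<close>] by blast
  have tail1: "\<forall>i. (case_nat s1 \<rho> i, case_nat e \<kappa> i, case_nat s1 \<rho> (Suc i)) \<in> ES"
    by (rule path_prepend_edge[OF tail]) (simp add: \<open>\<rho> 0 = s2\<close> e)
  define \<rho>' where "\<rho>' = case_nat s0 (case_nat s1 \<rho>)"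
  define \<kappa>' where "\<kappa>' = case_nat e (case_nat e \<kappa>)"
  have path: "\<forall>i. (\<rho>' i, \<kappa>' i, \<rho>' (Suc i)) \<in> ES"
    unfolding \<rho>'_def \<kappa>'_def
    by (rule path_prepend_edge[OF tail1]) (simp add: \<open>(s0, e, s1) \<in> ES\<close>)
  moreover have "\<rho>' 0 = s0"
    by (simp add: \<rho>'_def)
  ultimately have "\<kappa>' \<in> W"
    using winning unfolding winning_from_def by blast
  define w where "w = inv f \<circ> \<kappa>'"
  have "f (w i) = \<kappa>' i" for i
    using pair_game_strategy_colour[OF path[rule_format, of i]] by (simp add: w_def f_inv_into_f)
  then have "f \<circ> w \<in> W"
    using \<open>\<kappa>' \<in> W\<close> by (simp add: comp_def)
  then have "w 0 \<noteq> w (Suc 0)"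
    by (rule no_initial_repetition)
  then show False
    unfolding w_def \<kappa>'_def by simp
qed

lemma pair_game_fibre_ge_colours: "|UNIV :: 'c set| \<le>o |{m. ([a], m) \<in> S}|"
proof (rule card_of_ordLeqI[OF pair_game_first_memory_inj])
  fix c
  have "(s0, f c, ([a], \<delta> (snd s0) (f c))) \<in> ES"
    by (rule pair_game_chromatic_first_move) simp
  then show "\<delta> (snd s0) (f c) \<in> {m. ([a], m) \<in> S}"
    using is_strategyD(1)[OF strategy] unfolding cgraph_def by blast
qed

end

end

context
  includes cardinal_syntax
begin

lemma not_chrom_mem_lt_W2:
  assumes "a \<noteq> (b :: 'c)"
  shows "\<not> chrom_mem_lt TYPE('c list) TYPE('m) (W2 :: (nat \<Rightarrow> 'c) set) |UNIV :: 'c set|"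
proof
  assume small: "chrom_mem_lt TYPE('c list) TYPE('m) (W2 :: (nat \<Rightarrow> 'c) set) |UNIV :: 'c set|"
  have "has_winning_strategy UNIV (pair_game id a b) (UNIV - {[]}) [] W2"
    using assms by (rule has_winning_strategy_pair_game) simp_all
  then obtain S :: "('c list \<times> 'm) set" and ES s0 \<delta> where
    strategy: "is_strategy UNIV (pair_game id a b) (UNIV - {[]}) [] S ES fst s0" and
    winning: "winning_from ES s0 W2" and chromatic: "chromatic ES \<delta>" and
    small_fibres: "\<forall>v. |{m. (v, m) \<in> S}| <o |UNIV :: 'c set|"
    using small[unfolded chrom_mem_lt_def, rule_format, OF conjI[OF is_game_pair_game]] by blast
  have "|UNIV :: 'c set| \<le>o |{m. ([a], m) \<in> S}|"
    using strategy chromatic winning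
    by (rule pair_game_fibre_ge_colours) (simp add: W2_no_initial_repetition)
  with small_fibres show False
    using not_ordLess_ordLeq by blast
qed

lemma not_eps_chrom_mem_lt_W2:
  assumes "a \<noteq> (b :: 'c)"
  shows "\<not> eps_chrom_mem_lt TYPE('c list) TYPE('m) (W2 :: (nat \<Rightarrow> 'c) set) |UNIV :: 'c set|"
proof
  assume small: "eps_chrom_mem_lt TYPE('c list) TYPE('m) (W2 :: (nat \<Rightarrow> 'c) set) |UNIV :: 'c set|"
  have "has_winning_strategy UNIV (pair_game Some a b) (UNIV - {[]}) [] (eps_ext W2)"
    using assms by (rule has_winning_strategy_pair_game) (simp_all add: Some_comp_in_eps_ext_iff)
  then obtain M :: "'m set" and S :: "('c list \<times> 'm) set" and ES s0 \<delta> where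
    small_memory: "|M| <o |UNIV :: 'c set|" and "S \<subseteq> UNIV \<times> M" and
    strategy: "is_strategy UNIV (pair_game Some a b) (UNIV - {[]}) [] S ES fst s0" and
    winning: "winning_from ES s0 (eps_ext W2)" and chromatic: "chromatic ES \<delta>"
    using small[unfolded eps_chrom_mem_lt_def, rule_format, OF conjI[OF is_game_pair_game]] by blast
  have "|UNIV :: 'c set| \<le>o |{m. ([a], m) \<in> S}|"
    using strategy chromatic winning
    by (rule pair_game_fibre_ge_colours) (simp add: Some_comp_in_eps_ext_iff W2_no_initial_repetition)
  also have "|{m. ([a], m) \<in> S}| \<le>o |M|"
    using \<open>S \<subseteq> UNIV \<times> M\<close> by (intro card_of_mono1) blast
  finally show False
    using small_memory not_ordLess_ordLeq by blast
qed

end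

theorem propositionB1:
  assumes "\<exists>a b :: 'c. a \<noteq> b"
  shows "\<not> chrom_mem_lt TYPE('c list) TYPE('m) (W2 :: (nat \<Rightarrow> 'c) set) (card_of (UNIV :: 'c set))
       \<and> \<not> eps_chrom_mem_lt TYPE('c list) TYPE('m) (W2 :: (nat \<Rightarrow> 'c) set) (card_of (UNIV :: 'c set))"
proof -
  from assms obtain a b :: 'c where "a \<noteq> b" by blast
  show ?thesis
    using not_chrom_mem_lt_W2[OF \<open>a \<noteq> b\<close>] not_eps_chrom_mem_lt_W2[OF \<open>a \<noteq> b\<close>] by (rule conjI)
qed

end
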